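(* For all integers $k\geq 5$ and $n\geq 2$, $$Q(n,k)\leq 2^{c_k(k-2)^n},\qquad\text{where } c_k=\frac{\log_2 k!}{k-2}+\frac{k}{k-4}.$$
   Context: An $n$-ary quasigroup of order $k$ is a function $f:\Sigma^n\to\Sigma$, where $\Sigma=\{0,1,\dots,k-1\}$, such that fixing any $n-1$ of its arguments to arbitrary values of $\Sigma$ yields a bijection $\Sigma\to\Sigma$ in the remaining argument. $Q(n,k)$ denotes the number of distinct $n$-ary quasigroups of order $k$ on the fixed set $\Sigma=\{0,1,\dots,k-1\}$. *)

theory Defs
  imports "HOL-Analysis.Analysis" "HOL-Library.FuncSet"
begin

text \<open>Arguments of an n-ary operation on Sigma = {0..<k}: tuples x indexed by {0..<n},
  represented extensionally (x i = undefined outside {0..<n}).\<close>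
definition tuples :: "nat \<Rightarrow> nat \<Rightarrow> (nat \<Rightarrow> nat) set" where
  "tuples n k = PiE {0..<n} (\<lambda>_. {0..<k})"

definition is_quasigroup :: "nat \<Rightarrow> nat \<Rightarrow> ((nat \<Rightarrow> nat) \<Rightarrow> nat) \<Rightarrow> bool" where
  "is_quasigroup n k f \<longleftrightarrow>
     f \<in> tuples n k \<rightarrow>\<^sub>E {0..<k} \<and>
     (\<forall>x \<in> tuples n k. \<forall>i < n. bij_betw (\<lambda>a. f (x(i := a))) {0..<k} {0..<k})"

definition Q :: "nat \<Rightarrow> nat \<Rightarrow> nat" where
  "Q n k = card {f. is_quasigroup n k f}"

end

theory Submission
  imports Defs
begin

text \<open>Fixing the last argument of an \<open>(m+1)\<close>-ary quasigroup of order \<open>k\<close> yields \<open>k\<close>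
  pointwise distinct \<open>m\<close>-ary quasigroups (layers). The first \<open>k - 1\<close> layers determine the
  quasigroup, and at every point layer \<open>k - 2\<close> takes one of the two values missed by the layers
  before it. Quasigroups with at most two admissible values at each point are few: relative to a
  fixed one \<open>g0\<close>, each is determined by the set where it deviates from \<open>g0\<close>, and these
  deviation sets are unions of atoms that are closed under moves in every coordinate direction,
  hence of size at least \<open>2^m\<close>. This gives \<open>Q(m+1,k) \<le> Q(m,k)^(k-2) 2^((k/2)^m)\<close>, and solving
  the recursion from \<open>Q(1,k) \<le> k!\<close> gives the bound.\<close>

lemma two_pow_card_le_card_if_upd_closed:
  assumes "finite J" "finite S" "S \<noteq> {}"
    and "\<forall>x\<in>S. \<forall>i\<in>J. \<exists>c. x(i := c) \<in> S \<and> x(i := c) \<noteq> x"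
  shows "2 ^ card J \<le> card S"
  using assms
proof (induction J arbitrary: S rule: finite_induct)
  case empty
  then show ?case by (simp add: Suc_leI card_gt_0_iff)
next
  case (insert j J)
  have IH: "2 ^ card J \<le> card {x\<in>S. P (x j)}" if "\<exists>x\<in>S. P (x j)" for P
  proof (rule insert.IH)
    show "\<forall>x\<in>{x\<in>S. P (x j)}. \<forall>i\<in>J. \<exists>c. x(i := c) \<in> {x\<in>S. P (x j)} \<and> x(i := c) \<noteq> x"
      using insert.prems(3) insert.hyps(2) by fastforce
  qed (use that insert.prems(1) in auto)
  obtain x0 where x0: "x0 \<in> S" using insert.prems by auto
  obtain c where c: "x0(j := c) \<in> S" "x0(j := c) \<noteq> x0" using insert.prems(3) x0 by blast
  have "card S = card (S \<inter> {x. x j = x0 j}) + card (S - {x. x j = x0 j})"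
    using insert.prems(1) by (rule card_Int_Diff)
  also have "\<dots> = card {x\<in>S. x j = x0 j} + card {x\<in>S. x j \<noteq> x0 j}"
    by (simp add: Int_def set_diff_eq)
  finally have "card S = card {x\<in>S. x j = x0 j} + card {x\<in>S. x j \<noteq> x0 j}" .
  moreover have "2 ^ card J \<le> card {x\<in>S. x j = x0 j}"
    using x0 by (intro IH) auto
  moreover have "2 ^ card J \<le> card {x\<in>S. x j \<noteq> x0 j}"
    using c by (intro IH) (metis fun_upd_same fun_upd_triv)
  ultimately show ?case using insert.hyps by simp
qed

definition atom :: "'a set set \<Rightarrow> 'a \<Rightarrow> 'a set" where
  "atom F y = {z \<in> \<Union>F. \<forall>A\<in>F. z \<in> A \<longleftrightarrow> y \<in> A}"

lemma self_in_atom: "y \<in> \<Union>F \<Longrightarrow> y \<in> atom F y"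
  unfolding atom_def by auto

lemma atom_eq: "z \<in> atom F y \<Longrightarrow> atom F z = atom F y"
  unfolding atom_def by auto

lemma atom_subset: "y \<in> A \<Longrightarrow> A \<in> F \<Longrightarrow> atom F y \<subseteq> A"
  unfolding atom_def by auto

lemma card_family_le_two_powr_atoms:
  fixes F :: "'a set set"
  assumes "finite X" "\<Union>F \<subseteq> X" "s > 0" and atom_large: "\<And>y. y \<in> \<Union>F \<Longrightarrow> s \<le> card (atom F y)"
  shows "real (card F) \<le> 2 powr (real (card X) / real s)"
proof -
  define atoms where "atoms = atom F ` \<Union>F"
  have fin: "finite (\<Union>F)" using assms(1,2) by (rule finite_subset[rotated])
  then have "finite F" "finite atoms" unfolding atoms_def by (auto dest: finite_UnionD)
  have "pairwise disjnt atoms"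
  proof (rule pairwiseI)
    fix a b assume "a \<in> atoms" "b \<in> atoms" "a \<noteq> b"
    then show "disjnt a b"
      unfolding atoms_def disjnt_def by (auto dest: atom_eq)
  qed
  then have "card (\<Union>atoms) = sum card atoms"
    by (rule card_Union_disjoint) (auto simp: atoms_def atom_def intro: finite_subset[OF _ fin])
  moreover have "card atoms * s \<le> sum card atoms"
    using sum_bounded_below[of atoms s card] atom_large by (auto simp: atoms_def)
  moreover have "card (\<Union>atoms) \<le> card X"
    using assms(1,2) by (intro card_mono) (auto simp: atoms_def atom_def)
  ultimately have "real (card atoms) * real s \<le> real (card X)"
    by (metis of_nat_le_iff of_nat_mult order_trans)
  then have card_atoms: "real (card atoms) \<le> real (card X) / real s"
    using assms(3) by (metis of_nat_0_less_iff pos_le_divide_eq)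
  have "A = \<Union>{a \<in> atoms. a \<subseteq> A}" if "A \<in> F" for A
  proof
    show "A \<subseteq> \<Union>{a \<in> atoms. a \<subseteq> A}"
    proof
      fix y assume "y \<in> A"
      then have "y \<in> \<Union>F" using that by blast
      then have "atom F y \<in> atoms" "y \<in> atom F y" by (auto simp: atoms_def self_in_atom)
      moreover have "atom F y \<subseteq> A" using \<open>y \<in> A\<close> that by (rule atom_subset)
      ultimately show "y \<in> \<Union>{a \<in> atoms. a \<subseteq> A}" by blast
    qed
  qed auto
  then have "inj_on (\<lambda>A. {a \<in> atoms. a \<subseteq> A}) F"
    by (metis (no_types, lifting) inj_onI)
  then have "card F \<le> card (Pow atoms)"
    by (rule card_inj_on_le) (use \<open>finite atoms\<close> in auto)
  then have "real (card F) \<le> 2 powr real (card atoms)"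
    using \<open>finite atoms\<close> by (simp add: card_Pow powr_realpow)
  also have "\<dots> \<le> 2 powr (real (card X) / real s)"
    using card_atoms by simp
  finally show ?thesis .
qed

lemma tuples_upd: "y \<in> tuples d k \<Longrightarrow> i < d \<Longrightarrow> a < k \<Longrightarrow> y(i := a) \<in> tuples d k"
  unfolding tuples_def by (auto simp: PiE_def extensional_def)

lemma tuples_less: "y \<in> tuples d k \<Longrightarrow> i < d \<Longrightarrow> y i < k"
  unfolding tuples_def by (auto simp: PiE_def)

lemma finite_tuples: "finite (tuples d k)"
  unfolding tuples_def by (auto intro: finite_PiE)

lemma card_tuples: "card (tuples d k) = k ^ d"
  unfolding tuples_def by (simp add: card_PiE)

lemma tuples_Suc_upd: "y \<in> tuples d k \<Longrightarrow> t < k \<Longrightarrow> y(d := t) \<in> tuples (Suc d) k"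
  unfolding tuples_def by (auto simp: PiE_def extensional_def)

lemma tuples_SucE:
  assumes "x \<in> tuples (Suc d) k"
  obtains y where "y \<in> tuples d k" "x = y(d := x d)" "x d < k"
proof (rule that[of "x(d := undefined)"])
  show "x(d := undefined) \<in> tuples d k"
    using assms unfolding tuples_def by (auto simp: PiE_def extensional_def)
qed (use assms in \<open>auto simp: tuples_def PiE_def\<close>)

lemma quasigroup_less: "is_quasigroup d k g \<Longrightarrow> y \<in> tuples d k \<Longrightarrow> g y < k"
  unfolding is_quasigroup_def by (metis PiE_mem atLeastLessThan_iff)

lemma quasigroup_eqI:
  assumes "is_quasigroup d k g" "is_quasigroup d k g'" "\<And>y. y \<in> tuples d k \<Longrightarrow> g y = g' y"
  shows "g = g'"
  using assms unfolding is_quasigroup_def by (metis PiE_ext)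

lemma finite_quasigroups: "finite {g. is_quasigroup d k g}"
  by (rule finite_subset[of _ "tuples d k \<rightarrow>\<^sub>E {0..<k}"])
    (auto simp: is_quasigroup_def intro: finite_PiE finite_tuples)

lemma quasigroup_line_bij:
  "is_quasigroup d k g \<Longrightarrow> y \<in> tuples d k \<Longrightarrow> i < d \<Longrightarrow>
   bij_betw (\<lambda>a. g (y(i := a))) {0..<k} {0..<k}"
  unfolding is_quasigroup_def by blast

lemma quasigroup_line_inj:
  assumes "is_quasigroup d k g" "y \<in> tuples d k" "i < d" "a < k" "b < k"
    and "g (y(i := a)) = g (y(i := b))"
  shows "a = b"
  using bij_betw_imp_inj_on[OF quasigroup_line_bij[OF assms(1-3)]] assms(4-6)
  by (auto dest: inj_onD)

lemma quasigroup_line_surj: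
  assumes "is_quasigroup d k g" "y \<in> tuples d k" "i < d" "v < k"
  obtains a where "a < k" "g (y(i := a)) = v"
proof -
  have "v \<in> (\<lambda>a. g (y(i := a))) ` {0..<k}"
    using bij_betw_imp_surj_on[OF quasigroup_line_bij[OF assms(1-3)]] assms(4) by simp
  then show ?thesis using that by auto
qed

definition quasigroups_within ::
    "nat \<Rightarrow> nat \<Rightarrow> ((nat \<Rightarrow> nat) \<Rightarrow> nat set) \<Rightarrow> ((nat \<Rightarrow> nat) \<Rightarrow> nat) set" where
  "quasigroups_within d k M = {g. is_quasigroup d k g \<and> (\<forall>y\<in>tuples d k. g y \<in> M y)}"

locale two_choice_quasigroups =
  fixes d k :: nat and M :: "(nat \<Rightarrow> nat) \<Rightarrow> nat set" and g0 :: "(nat \<Rightarrow> nat) \<Rightarrow> nat"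
  assumes card_choices: "\<And>y. y \<in> tuples d k \<Longrightarrow> finite (M y) \<and> card (M y) \<le> 2"
    and g0_within: "g0 \<in> quasigroups_within d k M"
begin

abbreviation G :: "((nat \<Rightarrow> nat) \<Rightarrow> nat) set" where "G \<equiv> quasigroups_within d k M"

definition other :: "(nat \<Rightarrow> nat) \<Rightarrow> nat" where
  "other y = (SOME v. v \<in> M y \<and> v \<noteq> g0 y)"

definition deviation :: "((nat \<Rightarrow> nat) \<Rightarrow> nat) \<Rightarrow> (nat \<Rightarrow> nat) set" where
  "deviation g = {y \<in> tuples d k. g y \<noteq> g0 y}"

text \<open>On \<open>deviation g\<close> the value \<open>other y\<close> is \<open>g y\<close>, so \<open>flip i\<close> moves \<open>y\<close> along
  direction \<open>i\<close> to the point where \<open>g0\<close> takes the value \<open>g y\<close>; the map does not depend on \<open>g\<close>.\<close>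
definition flip :: "nat \<Rightarrow> (nat \<Rightarrow> nat) \<Rightarrow> nat \<Rightarrow> nat" where
  "flip i y = y(i := (SOME a. a < k \<and> g0 (y(i := a)) = other y))"

lemma within_is_quasigroup: "g \<in> G \<Longrightarrow> is_quasigroup d k g"
  unfolding quasigroups_within_def by simp

lemma deviation_value:
  assumes g: "g \<in> G" and y: "y \<in> deviation g"
  shows "g y = other y"
proof -
  have y_tuple: "y \<in> tuples d k" and ne: "g y \<noteq> g0 y" using y unfolding deviation_def by auto
  have in_M: "g y \<in> M y" "g0 y \<in> M y"
    using g g0_within y_tuple unfolding quasigroups_within_def by auto
  have other: "other y \<in> M y" "other y \<noteq> g0 y"
    unfolding other_def using someI[of "\<lambda>v. v \<in> M y \<and> v \<noteq> g0 y"] in_M ne by blast+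
  show ?thesis
  proof (rule ccontr)
    assume "g y \<noteq> other y"
    then have "card {g0 y, g y, other y} = 3" using ne other by auto
    moreover have "card {g0 y, g y, other y} \<le> card (M y)"
      using in_M other card_choices[OF y_tuple] by (intro card_mono) auto
    ultimately show False using card_choices[OF y_tuple] by simp
  qed
qed

lemma flip_tuple_value:
  assumes g: "g \<in> G" and y: "y \<in> deviation g" and i: "i < d"
  shows "flip i y \<in> tuples d k" "g0 (flip i y) = g y"
proof -
  have y_tuple: "y \<in> tuples d k" using y unfolding deviation_def by simp
  have "g y < k" using quasigroup_less[OF within_is_quasigroup[OF g] y_tuple] .
  then obtain a where "a < k" "g0 (y(i := a)) = other y"
    using quasigroup_line_surj[OF within_is_quasigroup[OF g0_within] y_tuple i]
    by (metis deviation_value[OF g y])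
  then have "(SOME a. a < k \<and> g0 (y(i := a)) = other y) < k \<and>
      g0 (y(i := SOME a. a < k \<and> g0 (y(i := a)) = other y)) = other y"
    by (intro someI_ex[of "\<lambda>a. a < k \<and> g0 (y(i := a)) = other y"]) blast
  then show "flip i y \<in> tuples d k" "g0 (flip i y) = g y"
    unfolding flip_def using tuples_upd[OF y_tuple i] deviation_value[OF g y] by auto
qed

lemma flip_in_deviation:
  assumes g: "g \<in> G" and y: "y \<in> deviation g" and i: "i < d"
  shows "flip i y \<in> deviation g" "flip i y \<noteq> y"
proof -
  have y_tuple: "y \<in> tuples d k" and ne: "g y \<noteq> g0 y" using y unfolding deviation_def by auto
  show "flip i y \<noteq> y" using flip_tuple_value[OF g y i] ne by auto
  obtain a where a: "flip i y = y(i := a)" unfolding flip_def by simp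
  have "a < k" using flip_tuple_value(1)[OF g y i] a i tuples_less by (metis fun_upd_same)
  moreover have "a \<noteq> y i" using \<open>flip i y \<noteq> y\<close> a by auto
  ultimately have "g (flip i y) \<noteq> g y"
    using quasigroup_line_inj[OF within_is_quasigroup[OF g] y_tuple i, of a "y i"]
      tuples_less[OF y_tuple i] a by auto
  then show "flip i y \<in> deviation g"
    using flip_tuple_value[OF g y i] unfolding deviation_def by auto
qed

lemma flip_inj_on_line:
  assumes g: "g \<in> G" and i: "i < d"
  shows "inj_on (flip i) (deviation g \<inter> range (\<lambda>b. y(i := b)))"
proof (rule inj_onI)
  fix u w assume u: "u \<in> deviation g \<inter> range (\<lambda>b. y(i := b))"
    and w: "w \<in> deviation g \<inter> range (\<lambda>b. y(i := b))" and eq: "flip i u = flip i w"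
  then obtain a b where ab: "u = y(i := a)" "w = y(i := b)" by auto
  have tuples: "u \<in> tuples d k" "w \<in> tuples d k" using u w unfolding deviation_def by auto
  have "g u = g w" using flip_tuple_value(2)[OF g _ i] u w eq by (metis IntD1)
  moreover have "u = u(i := u i)" "w = u(i := w i)" using ab by auto
  ultimately have "u i = w i"
    using quasigroup_line_inj[OF within_is_quasigroup[OF g] tuples(1) i] tuples_less[OF _ i] tuples
    by metis
  then show "u = w" using ab by simp
qed

lemma flip_maps_line:
  assumes g: "g \<in> G" and i: "i < d"
  shows "flip i ` (deviation g \<inter> range (\<lambda>b. y(i := b))) \<subseteq> deviation g \<inter> range (\<lambda>b. y(i := b))"
  using flip_in_deviation(1)[OF g _ i] by (auto simp: flip_def)

text \<open>\<open>flip i\<close> permutes the finite set \<open>deviation g \<inter> deviation g' \<inter> line\<close>, so a point of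
  \<open>deviation g\<close> flipped into \<open>deviation g'\<close> must already lie in \<open>deviation g'\<close>.\<close>
lemma flip_in_deviation_iff:
  assumes g: "g \<in> G" and g': "g' \<in> G" and y: "y \<in> deviation g" and i: "i < d"
  shows "flip i y \<in> deviation g' \<longleftrightarrow> y \<in> deviation g'"
proof
  assume flip_y: "flip i y \<in> deviation g'"
  define L where "L = range (\<lambda>b. y(i := b))"
  define P where "P = deviation g \<inter> deviation g' \<inter> L"
  have "y \<in> L" unfolding L_def by (metis fun_upd_triv rangeI)
  have "finite P" unfolding P_def deviation_def using finite_tuples by auto
  moreover have "flip i ` P \<subseteq> P"
    using flip_maps_line[OF g i] flip_maps_line[OF g' i] unfolding P_def L_def by blast
  moreover have inj: "inj_on (flip i) (deviation g \<inter> L)"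
    unfolding L_def by (rule flip_inj_on_line[OF g i])
  then have "inj_on (flip i) P" unfolding P_def by (rule inj_on_subset) blast
  ultimately have "flip i ` P = P" by (rule endo_inj_surj)
  moreover have "flip i y \<in> P"
    using flip_maps_line[OF g i] \<open>y \<in> L\<close> y flip_y unfolding P_def L_def by blast
  ultimately obtain z where "z \<in> P" "flip i z = flip i y" by force
  then have "z = y" using inj y \<open>y \<in> L\<close> unfolding P_def by (auto dest: inj_onD)
  with \<open>z \<in> P\<close> show "y \<in> deviation g'" unfolding P_def by simp
qed (rule flip_in_deviation(1)[OF g' _ i])

lemma card_atom_deviations:
  assumes y: "y \<in> \<Union>(deviation ` G)"
  shows "2 ^ d \<le> card (atom (deviation ` G) y)"
proof -
  have "2 ^ card {0..<d} \<le> card (atom (deviation ` G) y)"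
  proof (rule two_pow_card_le_card_if_upd_closed)
    show "finite (atom (deviation ` G) y)"
      by (rule finite_subset[OF _ finite_tuples]) (auto simp: atom_def deviation_def)
    show "atom (deviation ` G) y \<noteq> {}" using self_in_atom[OF y] by auto
    show "\<forall>x\<in>atom (deviation ` G) y. \<forall>i\<in>{0..<d}.
        \<exists>c. x(i := c) \<in> atom (deviation ` G) y \<and> x(i := c) \<noteq> x"
    proof (intro ballI)
      fix x i assume x: "x \<in> atom (deviation ` G) y" and "i \<in> {0..<d}"
      then have i: "i < d" by simp
      obtain g where g: "g \<in> G" "x \<in> deviation g" using x unfolding atom_def by auto
      have "flip i x \<in> atom (deviation ` G) y"
        using x flip_in_deviation(1)[OF g i] flip_in_deviation_iff[OF g(1) _ g(2) i]
        unfolding atom_def by blast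
      moreover have "flip i x \<noteq> x" using flip_in_deviation(2)[OF g i] .
      ultimately show "\<exists>c. x(i := c) \<in> atom (deviation ` G) y \<and> x(i := c) \<noteq> x"
        unfolding flip_def by blast
    qed
  qed simp
  then show ?thesis by simp
qed

lemma inj_on_deviation: "inj_on deviation G"
proof (rule inj_onI)
  fix g g' assume g: "g \<in> G" and g': "g' \<in> G" and eq: "deviation g = deviation g'"
  show "g = g'"
  proof (rule quasigroup_eqI[OF within_is_quasigroup[OF g] within_is_quasigroup[OF g']])
    fix y assume y: "y \<in> tuples d k"
    show "g y = g' y"
    proof (cases "y \<in> deviation g")
      case True
      then show ?thesis using deviation_value[OF g True] deviation_value[OF g'] eq by simp
    next
      case False
      then have "y \<notin> deviation g'" using eq by simp
      with False y show ?thesis unfolding deviation_def by simp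
    qed
  qed
qed

lemma card_le: "real (card G) \<le> 2 powr (real k ^ d / 2 ^ d)"
proof -
  have "real (card (deviation ` G)) \<le> 2 powr (real (card (tuples d k)) / real (2 ^ d))"
    by (rule card_family_le_two_powr_atoms[OF finite_tuples _ _ card_atom_deviations])
      (auto simp: deviation_def)
  then show ?thesis by (simp add: card_image[OF inj_on_deviation] card_tuples)
qed

end

lemma card_quasigroups_within_le:
  assumes "\<And>y. y \<in> tuples d k \<Longrightarrow> finite (M y) \<and> card (M y) \<le> 2"
  shows "real (card (quasigroups_within d k M)) \<le> 2 powr (real k ^ d / 2 ^ d)"
proof (cases "quasigroups_within d k M = {}")
  case False
  then obtain g0 where "g0 \<in> quasigroups_within d k M" by blast
  with assms interpret two_choice_quasigroups d k M g0 by unfold_locales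
  show ?thesis by (rule card_le)
qed simp

definition layer :: "nat \<Rightarrow> nat \<Rightarrow> ((nat \<Rightarrow> nat) \<Rightarrow> nat) \<Rightarrow> nat \<Rightarrow> (nat \<Rightarrow> nat) \<Rightarrow> nat" where
  "layer m k f t = restrict (\<lambda>y. f (y(m := t))) (tuples m k)"

lemma is_quasigroup_layer:
  assumes f: "is_quasigroup (Suc m) k f" and t: "t < k"
  shows "is_quasigroup m k (layer m k f t)"
  unfolding is_quasigroup_def
proof (intro conjI ballI allI impI)
  show "layer m k f t \<in> tuples m k \<rightarrow>\<^sub>E {0..<k}"
    using quasigroup_less[OF f tuples_Suc_upd[OF _ t]] by (auto simp: layer_def)
next
  fix x i assume x: "x \<in> tuples m k" and i: "i < m"
  have "bij_betw (\<lambda>a. f ((x(m := t))(i := a))) {0..<k} {0..<k}"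
    using quasigroup_line_bij[OF f tuples_Suc_upd[OF x t]] i by simp
  moreover have "bij_betw (\<lambda>a. layer m k f t (x(i := a))) {0..<k} {0..<k} =
      bij_betw (\<lambda>a. f ((x(m := t))(i := a))) {0..<k} {0..<k}"
    by (rule bij_betw_cong) (use tuples_upd[OF x i] i in \<open>simp add: layer_def fun_upd_twist\<close>)
  ultimately show "bij_betw (\<lambda>a. layer m k f t (x(i := a))) {0..<k} {0..<k}" by simp
qed

lemma inj_on_layer_values:
  assumes f: "is_quasigroup (Suc m) k f" and y: "y \<in> tuples m k"
  shows "inj_on (\<lambda>t. layer m k f t y) {0..<k}"
proof (rule inj_onI)
  fix s t assume "s \<in> {0..<k}" "t \<in> {0..<k}" and eq: "layer m k f s y = layer m k f t y"
  then have s: "s < k" and t: "t < k" by auto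
  have "f ((y(m := s))(m := s)) = f ((y(m := s))(m := t))" using eq y by (simp add: layer_def)
  then show "s = t" using quasigroup_line_inj[OF f tuples_Suc_upd[OF y s], of m s t] s t by simp
qed

text \<open>Every line in the last direction is a permutation, so the last layer is determined by
  the others.\<close>
lemma quasigroup_eq_if_layers_eq:
  assumes f: "is_quasigroup (Suc m) k f" and f': "is_quasigroup (Suc m) k f'"
    and layers: "\<And>t. t < k - 1 \<Longrightarrow> layer m k f t = layer m k f' t"
  shows "f = f'"
proof (rule quasigroup_eqI[OF f f'])
  have below: "f (y(m := t)) = f' (y(m := t))" if y: "y \<in> tuples m k" and t: "t < k - 1" for y t
    using fun_cong[OF layers[OF t], of y] y by (simp add: layer_def)
  have last: "f (y(m := k - 1)) = f' (y(m := k - 1))" if y: "y \<in> tuples m k" and "0 < k" for y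
  proof -
    have last_tuple: "y(m := k - 1) \<in> tuples (Suc m) k" using tuples_Suc_upd[OF y] \<open>0 < k\<close> by simp
    obtain a where a: "a < k" "f' ((y(m := k - 1))(m := a)) = f (y(m := k - 1))"
      using quasigroup_line_surj[OF f' last_tuple, of m] quasigroup_less[OF f last_tuple] by blast
    have "a = k - 1"
    proof (rule ccontr)
      assume "a \<noteq> k - 1"
      then have "f ((y(m := k - 1))(m := a)) = f ((y(m := k - 1))(m := k - 1))"
        using below[OF y, of a] a by simp
      then show False
        using quasigroup_line_inj[OF f last_tuple, of m a "k - 1"] a \<open>a \<noteq> k - 1\<close> by simp
    qed
    then show ?thesis using a by simp
  qed
  fix x assume "x \<in> tuples (Suc m) k"
  then obtain y where y: "y \<in> tuples m k" "x = y(m := x m)" "x m < k" by (rule tuples_SucE)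
  show "f x = f' x"
  proof (cases "x m < k - 1")
    case True
    then show ?thesis using below y by metis
  next
    case False
    then have "x m = k - 1" "0 < k" using y(3) by auto
    then show ?thesis using last y by metis
  qed
qed

definition latin_layers :: "nat \<Rightarrow> nat \<Rightarrow> nat \<Rightarrow> (nat \<Rightarrow> (nat \<Rightarrow> nat) \<Rightarrow> nat) set" where
  "latin_layers m k j = {h \<in> {0..<j} \<rightarrow>\<^sub>E {g. is_quasigroup m k g}.
     \<forall>y\<in>tuples m k. inj_on (\<lambda>t. h t y) {0..<j}}"

lemma finite_latin_layers: "finite (latin_layers m k j)"
  unfolding latin_layers_def
  by (rule finite_subset[of _ "{0..<j} \<rightarrow>\<^sub>E {g. is_quasigroup m k g}"])
    (auto intro: finite_PiE finite_quasigroups)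

lemma card_latin_layers_le: "card (latin_layers m k j) \<le> Q m k ^ j"
proof -
  have "card (latin_layers m k j) \<le> card ({0..<j} \<rightarrow>\<^sub>E {g. is_quasigroup m k g})"
    unfolding latin_layers_def by (rule card_mono) (auto intro: finite_PiE finite_quasigroups)
  then show ?thesis by (simp add: card_PiE Q_def)
qed

abbreviation missed_values :: "nat \<Rightarrow> nat \<Rightarrow> (nat \<Rightarrow> (nat \<Rightarrow> nat) \<Rightarrow> nat) \<Rightarrow> (nat \<Rightarrow> nat) \<Rightarrow> nat set"
  where "missed_values j k h y \<equiv> {0..<k} - (\<lambda>t. h t y) ` {0..<j}"

lemma card_missed_values:
  assumes "h \<in> latin_layers m k j" "y \<in> tuples m k" "j \<le> k"
  shows "card (missed_values j k h y) = k - j"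
proof -
  have "(\<lambda>t. h t y) ` {0..<j} \<subseteq> {0..<k}"
    using assms(1,2) quasigroup_less unfolding latin_layers_def by fastforce
  moreover have "inj_on (\<lambda>t. h t y) {0..<j}" using assms(1,2) unfolding latin_layers_def by blast
  ultimately show ?thesis by (simp add: card_Diff_subset card_image)
qed

lemma Q_Suc_le:
  assumes k: "k \<ge> 2"
  shows "real (Q (Suc m) k) \<le> real (Q m k) ^ (k - 2) * 2 powr (real k ^ m / 2 ^ m)"
proof -
  define H where "H = latin_layers m k (k - 2)"
  define Last where "Last h = quasigroups_within m k (missed_values (k - 2) k h)" for h
  define layers where "layers f = (restrict (layer m k f) {0..<k - 2}, layer m k f (k - 2))" for f
  define QS where "QS = {f. is_quasigroup (Suc m) k f}"
  have "layers ` QS \<subseteq> Sigma H Last"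
  proof
    fix p assume "p \<in> layers ` QS"
    then obtain f where f: "is_quasigroup (Suc m) k f" and p: "p = layers f" unfolding QS_def by auto
    have "{0..<k - 2} \<subseteq> {0..<k}" by auto
    have "inj_on (\<lambda>t. restrict (layer m k f) {0..<k - 2} t y) {0..<k - 2}" if "y \<in> tuples m k" for y
      using inj_on_subset[OF inj_on_layer_values[OF f that] \<open>{0..<k - 2} \<subseteq> {0..<k}\<close>]
      by (simp add: inj_on_def)
    then have "restrict (layer m k f) {0..<k - 2} \<in> H"
      using is_quasigroup_layer[OF f] unfolding H_def latin_layers_def by auto
    moreover have "layer m k f (k - 2) y \<in> missed_values (k - 2) k (restrict (layer m k f) {0..<k - 2}) y"
      if "y \<in> tuples m k" for y
      using inj_on_layer_values[OF f that] quasigroup_less[OF is_quasigroup_layer[OF f] that] k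
      by (auto dest: inj_onD)
    ultimately show "p \<in> Sigma H Last"
      using is_quasigroup_layer[OF f, of "k - 2"] k
      unfolding p layers_def Last_def quasigroups_within_def by auto
  qed
  moreover have "inj_on layers QS"
  proof (rule inj_onI)
    fix f f' assume "f \<in> QS" "f' \<in> QS" and eq: "layers f = layers f'"
    have "layer m k f t = layer m k f' t" if "t < k - 1" for t
    proof (cases "t < k - 2")
      case True
      then show ?thesis using fun_cong[OF arg_cong[OF eq, of fst], of t] by (simp add: layers_def)
    next
      case False
      then have "t = k - 2" using that by simp
      then show ?thesis using arg_cong[OF eq, of snd] by (simp add: layers_def)
    qed
    then show "f = f'" using \<open>f \<in> QS\<close> \<open>f' \<in> QS\<close> quasigroup_eq_if_layers_eq unfolding QS_def by blast
  qed
  moreover have "finite H" "\<And>h. finite (Last h)"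
    unfolding H_def Last_def quasigroups_within_def
    by (auto intro: finite_latin_layers finite_subset[OF _ finite_quasigroups])
  ultimately have "card QS \<le> (\<Sum>h\<in>H. card (Last h))"
    using card_inj_on_le[of layers QS "Sigma H Last"] by simp
  then have "real (Q (Suc m) k) \<le> (\<Sum>h\<in>H. real (card (Last h)))"
    unfolding Q_def QS_def by (metis of_nat_le_iff of_nat_sum)
  also have "\<dots> \<le> (\<Sum>h\<in>H. 2 powr (real k ^ m / 2 ^ m))"
    using card_missed_values[of _ m k "k - 2"]
    by (intro sum_mono) (auto simp: H_def Last_def intro!: card_quasigroups_within_le)
  also have "\<dots> \<le> real (Q m k) ^ (k - 2) * 2 powr (real k ^ m / 2 ^ m)"
    using card_latin_layers_le[of m k "k - 2"] unfolding H_def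
    by (simp add: mult_right_mono flip: of_nat_power)
  finally show ?thesis .
qed

lemma Q_one_le_fact: "Q 1 k \<le> fact k"
proof -
  define e :: "nat \<Rightarrow> nat \<Rightarrow> nat" where "e a = (\<lambda>_. undefined)(0 := a)" for a
  have e_tuple: "e a \<in> tuples 1 k" if "a < k" for a
    using that unfolding e_def tuples_def by (auto simp: PiE_def extensional_def)
  have tuple_eq: "x = e (x 0)" if "x \<in> tuples 1 k" for x
    using that unfolding e_def tuples_def by (auto simp: PiE_def extensional_def)
  define perm where "perm f a = (if a < k then f (e a) else a)" for f :: "(nat \<Rightarrow> nat) \<Rightarrow> nat" and a
  have "perm f permutes {0..<k}" if f: "is_quasigroup 1 k f" for f
  proof -
    have "bij_betw (\<lambda>a. f (e a)) {0..<k} {0..<k}"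
    proof (cases "k = 0")
      case False
      then show ?thesis
        using quasigroup_line_bij[OF f e_tuple, of 0 0] by (simp add: e_def)
    qed (simp add: bij_betw_def)
    then have "bij_betw (perm f) {0..<k} {0..<k}"
      by (rule bij_betw_cong[THEN iffD1, rotated]) (simp add: perm_def)
    then show ?thesis by (auto intro: bij_imp_permutes simp: perm_def)
  qed
  moreover have "inj_on perm {f. is_quasigroup 1 k f}"
  proof (rule inj_onI)
    fix f f' assume f: "f \<in> {f. is_quasigroup 1 k f}" and f': "f' \<in> {f. is_quasigroup 1 k f}"
      and eq: "perm f = perm f'"
    show "f = f'"
    proof (rule quasigroup_eqI[of 1 k])
      fix x assume x: "x \<in> tuples 1 k"
      then have "x 0 < k" using tuples_less by blast
      then show "f x = f' x" using fun_cong[OF eq, of "x 0"] tuple_eq[OF x] by (simp add: perm_def)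
    qed (use f f' in auto)
  qed
  ultimately have "card {f. is_quasigroup 1 k f} \<le> card {p. p permutes {0..<k}}"
    by (intro card_inj_on_le) (auto simp: finite_permutations)
  then show ?thesis by (simp add: Q_def card_permutations)
qed

text \<open>The exponent solves \<open>a (m + 1) = (k - 2) a m + (k / 2) ^ (m + 1)\<close> with \<open>a 0 = log 2 k!\<close>,
  the recursion that \<open>Q_Suc_le\<close> and \<open>Q_one_le_fact\<close> impose on \<open>log 2 (Q (m + 1) k)\<close>.\<close>
lemma Q_Suc_le_closed_form:
  assumes "k \<ge> 5"
  shows "real (Q (Suc m) k) \<le> 2 powr (log 2 (real (fact k)) * (real k - 2) ^ m
    + real k / (real k - 4) * ((real k - 2) ^ m - (real k / 2) ^ m))"
proof (induction m)
  case 0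
  then show ?case using Q_one_le_fact[of k] by simp (metis of_nat_fact of_nat_le_iff)
next
  case (Suc m)
  define c where "c = real k / (real k - 4)"
  define a where "a = log 2 (real (fact k)) * (real k - 2) ^ m + c * ((real k - 2) ^ m - (real k / 2) ^ m)"
  have "c * (real k - 2) - real k / 2 = c * (real k / 2)"
    using assms by (simp add: c_def field_simps)
  then have "c * (real k - 2) * (real k / 2) ^ m - real k / 2 * (real k / 2) ^ m
      = c * (real k / 2) * (real k / 2) ^ m"
    by (metis left_diff_distrib)
  then have step: "a * (real k - 2) + (real k / 2) ^ Suc m =
      log 2 (real (fact k)) * (real k - 2) ^ Suc m + c * ((real k - 2) ^ Suc m - (real k / 2) ^ Suc m)"
    unfolding a_def by (simp add: algebra_simps)
  have "real (Q (Suc (Suc m)) k) \<le> real (Q (Suc m) k) ^ (k - 2) * 2 powr ((real k / 2) ^ Suc m)"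
    using Q_Suc_le[of k "Suc m"] assms by (simp add: power_divide)
  also have "\<dots> \<le> (2 powr a) ^ (k - 2) * 2 powr ((real k / 2) ^ Suc m)"
    using Suc.IH unfolding a_def c_def by (intro mult_right_mono power_mono) simp_all
  also have "(2 powr a) ^ (k - 2) = 2 powr (a * real (k - 2))"
    by (simp add: powr_powr[symmetric] powr_realpow)
  also have "2 powr (a * real (k - 2)) * 2 powr ((real k / 2) ^ Suc m)
      = 2 powr (a * (real k - 2) + (real k / 2) ^ Suc m)"
    using assms by (simp add: powr_add of_nat_diff)
  finally show ?case unfolding step c_def .
qed

theorem theorem1:
  fixes n k :: nat
  assumes "k \<ge> 5" and "n \<ge> 2"
  shows "real (Q n k) \<le>
    2 powr ((log 2 (real (fact k)) / (real k - 2) + real k / (real k - 4)) * (real k - 2) ^ n)"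
proof -
  obtain m where n: "n = Suc m" using assms(2) by (cases n) auto
  have k: "real k - 4 > 0" using assms(1) by simp
  have "(real k - 2) ^ m \<le> (real k - 2) ^ n" using k n by simp
  then have "(real k - 2) ^ m - (real k / 2) ^ m \<le> (real k - 2) ^ n"
    using zero_le_power[of "real k / 2" m] by linarith
  then have "real k / (real k - 4) * ((real k - 2) ^ m - (real k / 2) ^ m)
      \<le> real k / (real k - 4) * (real k - 2) ^ n"
    using k by (intro mult_left_mono) simp_all
  moreover have "log 2 (real (fact k)) / (real k - 2) * (real k - 2) ^ n
      = log 2 (real (fact k)) * (real k - 2) ^ m"
    using k n by simp
  then have "(log 2 (real (fact k)) / (real k - 2) + real k / (real k - 4)) * (real k - 2) ^ n
      = log 2 (real (fact k)) * (real k - 2) ^ m + real k / (real k - 4) * (real k - 2) ^ n"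
    by (simp add: distrib_right)
  ultimately have "log 2 (real (fact k)) * (real k - 2) ^ m
      + real k / (real k - 4) * ((real k - 2) ^ m - (real k / 2) ^ m)
    \<le> (log 2 (real (fact k)) / (real k - 2) + real k / (real k - 4)) * (real k - 2) ^ n"
    by linarith
  with Q_Suc_le_closed_form[OF assms(1), of m] show ?thesis
    unfolding n by (meson order_trans powr_mono one_le_numeral)
qed

end
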